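(* Assume (A1)–(A3). Let $[s,e]$ contain exactly one true change point $\tau_k$, with $s\le\tau_k<e$, and set $n_1=\tau_k-s+1$, $n_2=e-\tau_k$, $n=n_1+n_2$, $\rho=n_1n_2/n$. Then \[ C(s,e)-C(s,\tau_k)-C(\tau_k+1,e)\ge \rho\,\Delta_k^2-\Bigl((4m+2)M+\frac{(2m^2+2m)M}{n}\Bigr). \] If in addition $n_1\ge\ell_T/2$ and $n_2\ge\ell_T/2$, where $\ell_T=\min_{1\le j\le K+1}(\tau_j-\tau_{j-1})$, then \[ C(s,e)-C(s,\tau_k)-C(\tau_k+1,e)\ge \frac{\Delta_\star^2}{4}\ell_T-\Bigl((4m+2)M+\frac{(2m^2+2m)M}{\ell_T}\Bigr). \]
   Context: Let $Y_1,\dots,Y_T$ be random vectors in $\mathbb R^d$ with true change points $0=\tau_0<\tau_1<\dots<\tau_K<\tau_{K+1}=T$. Let $k:\mathbb R^d\times\mathbb R^d\to\mathbb R$ be a positive definite kernel with RKHS $\mathcal H$ and feature map $\phi(y)=k(y,\cdot)$; for a distribution $P$ let $\mu_P=\mathbb E_{Y\sim P}\phi(Y)\in\mathcal H$. For $1\le s\le e\le T$ define $\widehat C(s,e)=\sum_{t=s}^e k(Y_t,Y_t)-\frac{1}{e-s+1}\sum_{i=s}^e\sum_{j=s}^e k(Y_i,Y_j)$ and $C(s,e)=\mathbb E[\widehat C(s,e)]$. (A1) For a fixed integer $m\ge0$, $(Y_t)$ is $m$-dependent: for every $t$, $(Y_1,\dots,Y_t)$ is independent of $(Y_{t+m+1},\dots,Y_T)$;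 for each $k=1,\dots,K+1$, $(Y_t)_{\tau_{k-1}<t\le\tau_k}$ is strictly stationary with marginal $P_k$. (A2) $k$ is bounded and characteristic, $0\le k(x,y)\le M<\infty$. (A3) $\Delta_k^2:=\|\mu_{P_k}-\mu_{P_{k+1}}\|_{\mathcal H}^2>0$ for $k=1,\dots,K$, and $\Delta_\star^2:=\min_k\Delta_k^2>0$. *)

theory Defs
  imports "HOL-Probability.Probability"
begin

definition pos_def_kernel :: "('x \<Rightarrow> 'x \<Rightarrow> real) \<Rightarrow> bool" where
  "pos_def_kernel k \<longleftrightarrow> (\<forall>x y. k x y = k y x) \<and>
     (\<forall>(n::nat) (x::nat \<Rightarrow> 'x) (c::nat \<Rightarrow> real).
        0 \<le> (\<Sum>i<n. \<Sum>j<n. c i * c j * k (x i) (x j)))"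

text \<open>Squared RKHS distance of kernel mean embeddings, ||mu_P - mu_Q||^2,
  unfolded via the reproducing property:
  <mu_P, mu_Q> = int int k(x,y) dP(x) dQ(y).\<close>
definition mmd_sq :: "('x \<Rightarrow> 'x \<Rightarrow> real) \<Rightarrow> 'x measure \<Rightarrow> 'x measure \<Rightarrow> real" where
  "mmd_sq k P Q =
     (\<integral>x. (\<integral>y. k x y \<partial>P) \<partial>P) - 2 * (\<integral>x. (\<integral>y. k x y \<partial>Q) \<partial>P)
     + (\<integral>x. (\<integral>y. k x y \<partial>Q) \<partial>Q)"

definition characteristic_kernel :: "('x::topological_space \<Rightarrow> 'x \<Rightarrow> real) \<Rightarrow> bool" where
  "characteristic_kernel k \<longleftrightarrow>
     (\<forall>P Q. prob_space P \<longrightarrow> sets P = sets borel \<longrightarrow> prob_space Q \<longrightarrow> sets Q = sets borel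
        \<longrightarrow> mmd_sq k P Q = 0 \<longrightarrow> P = Q)"

definition Chat :: "('x \<Rightarrow> 'x \<Rightarrow> real) \<Rightarrow> (nat \<Rightarrow> 'w \<Rightarrow> 'x) \<Rightarrow> nat \<Rightarrow> nat \<Rightarrow> 'w \<Rightarrow> real" where
  "Chat k Y s e \<omega> = (\<Sum>t=s..e. k (Y t \<omega>) (Y t \<omega>))
     - (1 / real (e - s + 1)) * (\<Sum>i=s..e. \<Sum>j=s..e. k (Y i \<omega>) (Y j \<omega>))"

definition Cexp :: "'w measure \<Rightarrow> ('x \<Rightarrow> 'x \<Rightarrow> real) \<Rightarrow> (nat \<Rightarrow> 'w \<Rightarrow> 'x) \<Rightarrow> nat \<Rightarrow> nat \<Rightarrow> real" where
  "Cexp M k Y s e = (\<integral>\<omega>. Chat k Y s e \<omega> \<partial>M)"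

definition strictly_stationary_on ::
  "'w measure \<Rightarrow> (nat \<Rightarrow> 'w \<Rightarrow> 'x::topological_space) \<Rightarrow> nat set \<Rightarrow> bool" where
  "strictly_stationary_on M Y I \<longleftrightarrow>
     (\<forall>J h. finite J \<longrightarrow> J \<subseteq> I \<longrightarrow> (\<lambda>j. j + h) ` J \<subseteq> I \<longrightarrow>
        distr M (PiM J (\<lambda>_. borel)) (\<lambda>\<omega>. restrict (\<lambda>j. Y j \<omega>) J)
        = distr M (PiM J (\<lambda>_. borel)) (\<lambda>\<omega>. restrict (\<lambda>j. Y (j + h) \<omega>) J))"

definition m_dependent ::
  "'w measure \<Rightarrow> (nat \<Rightarrow> 'w \<Rightarrow> 'x::topological_space) \<Rightarrow> nat \<Rightarrow> nat \<Rightarrow> bool" where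
  "m_dependent M Y T m \<longleftrightarrow>
     (\<forall>t::nat. prob_space.indep_var M
        (PiM {1..t} (\<lambda>_. borel)) (\<lambda>\<omega>. restrict (\<lambda>i. Y i \<omega>) {1..t})
        (PiM {t+m+1..T} (\<lambda>_. borel)) (\<lambda>\<omega>. restrict (\<lambda>i. Y i \<omega>) {t+m+1..T}))"

end

theory Submission
  imports Defs
begin

text \<open>Write \<open>G(i,j) = E k(Y\<^sub>i,Y\<^sub>j)\<close>. The cost \<open>C(s,e)\<close> is the trace of \<open>G\<close> on \<open>[s,e]\<close>
  minus its total mass divided by the length, so in \<open>C(s,e) - C(s,\<tau>) - C(\<tau>+1,e)\<close> the traces
  cancel and only the block sums of \<open>G\<close> over \<open>A = [s,\<tau>]\<close> and \<open>B = [\<tau>+1,e]\<close> remain.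
  By m-dependence, as soon as \<open>|i - j| > m\<close>, \<open>G(i,j)\<close> is the inner product of the mean
  embeddings of the marginals of \<open>Y\<^sub>i\<close> and \<open>Y\<^sub>j\<close>; all entries lie in \<open>[0,M]\<close>.
  Hence a diagonal block sum differs from \<open>n\<^sub>A\<^sup>2 \<langle>\<mu>,\<mu>\<rangle>\<close> only on a band of width
  \<open>2m+1\<close>, and the cross block sum differs from \<open>n\<^sub>1 n\<^sub>2 \<langle>\<mu>\<^sub>k,\<mu>\<^sub>k\<^sub>+\<^sub>1\<rangle>\<close>
  only on an \<open>m \<times> m\<close> corner. The main terms combine to
  \<open>\<rho> (\<langle>\<mu>\<^sub>k,\<mu>\<^sub>k\<rangle> - 2\<langle>\<mu>\<^sub>k,\<mu>\<^sub>k\<^sub>+\<^sub>1\<rangle> + \<langle>\<mu>\<^sub>k\<^sub>+\<^sub>1,\<mu>\<^sub>k\<^sub>+\<^sub>1\<rangle>) = \<rho> \<Delta>\<^sub>k\<^sup>2\<close>, and the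
  second bound follows from \<open>\<rho> \<ge> l\<^sub>T/4\<close> when \<open>n\<^sub>1, n\<^sub>2 \<ge> l\<^sub>T/2\<close>.\<close>

lemma sum_sum_banded_abs_le:
  fixes f :: "nat \<Rightarrow> nat \<Rightarrow> real"
  assumes "finite I" "0 \<le> B"
    and bound: "\<And>i j. i \<in> I \<Longrightarrow> j \<in> I \<Longrightarrow> \<bar>f i j\<bar> \<le> B"
    and band: "\<And>i j. i \<in> I \<Longrightarrow> j \<in> I \<Longrightarrow> i + m < j \<or> j + m < i \<Longrightarrow> f i j = 0"
  shows "\<bar>\<Sum>i\<in>I. \<Sum>j\<in>I. f i j\<bar> \<le> real (card I) * ((2 * real m + 1) * B)"
proof -
  have row: "\<bar>\<Sum>j\<in>I. f i j\<bar> \<le> (2 * real m + 1) * B" if i: "i \<in> I" for i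
  proof -
    let ?W = "{i - m..i + m}"
    have "\<bar>\<Sum>j\<in>I. f i j\<bar> \<le> (\<Sum>j\<in>I. of_bool (j \<in> ?W) * B)"
      by (rule order_trans[OF sum_abs sum_mono]) (use i bound band in force)
    also have "\<dots> = real (card (I \<inter> ?W)) * B"
      using \<open>finite I\<close> by (simp add: sum_distrib_right[symmetric] Int_def)
    also have "\<dots> \<le> real (card ?W) * B"
      using \<open>0 \<le> B\<close> card_mono[of ?W "I \<inter> ?W"] by (intro mult_right_mono) auto
    also have "\<dots> \<le> (2 * real m + 1) * B"
      using \<open>0 \<le> B\<close> by (intro mult_right_mono) auto
    finally show ?thesis .
  qed
  have "\<bar>\<Sum>i\<in>I. \<Sum>j\<in>I. f i j\<bar> \<le> (\<Sum>i\<in>I. (2 * real m + 1) * B)"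
    by (rule order_trans[OF sum_abs sum_mono]) (rule row)
  then show ?thesis by simp
qed

lemma sum_sum_corner_abs_le:
  fixes f :: "nat \<Rightarrow> nat \<Rightarrow> real"
  assumes "0 \<le> B"
    and bound: "\<And>i j. i \<in> {s..t} \<Longrightarrow> j \<in> {t+1..e} \<Longrightarrow> \<bar>f i j\<bar> \<le> B"
    and far: "\<And>i j. i \<in> {s..t} \<Longrightarrow> j \<in> {t+1..e} \<Longrightarrow> i + m < j \<Longrightarrow> f i j = 0"
  shows "\<bar>\<Sum>i=s..t. \<Sum>j=t+1..e. f i j\<bar> \<le> real m * (real m * B)"
proof -
  let ?L = "{t+1-m..t}" and ?R = "{t+1..t+m}"
  have "\<bar>\<Sum>i=s..t. \<Sum>j=t+1..e. f i j\<bar>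
      \<le> (\<Sum>i=s..t. of_bool (i \<in> ?L) * (\<Sum>j=t+1..e. of_bool (j \<in> ?R) * B))"
    unfolding sum_distrib_left
    by (rule order_trans[OF sum_abs sum_mono], rule order_trans[OF sum_abs sum_mono])
      (use bound far in force)
  also have "\<dots> = real (card ({s..t} \<inter> ?L)) * (real (card ({t+1..e} \<inter> ?R)) * B)"
    by (simp only: sum_distrib_right[symmetric] sum_of_bool_eq finite_atLeastAtMost Collect_mem_eq)
  also have "\<dots> \<le> real m * (real m * B)"
  proof -
    have "card ({s..t} \<inter> ?L) \<le> m" "card ({t+1..e} \<inter> ?R) \<le> m"
      by (intro order_trans[OF card_mono[OF _ Int_lower2]]; simp)+
    then show ?thesis using \<open>0 \<le> B\<close> by (intro mult_mono) auto
  qed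
  finally show ?thesis .
qed

lemma abs_mult_ratio_le:
  fixes d x y z E :: real
  assumes "\<bar>d\<bar> \<le> x * E" "0 < x" "0 \<le> y" "y \<le> z"
  shows "\<bar>d * (y / (x * z))\<bar> \<le> E"
proof -
  have "0 \<le> E" using assms by (meson abs_ge_zero order_trans zero_le_mult_iff not_less)
  have "\<bar>d * (y / (x * z))\<bar> = \<bar>d\<bar> * (y / (x * z))"
    using assms by (simp add: abs_mult)
  also have "\<dots> \<le> x * E * (y / (x * z))"
    using assms by (intro mult_right_mono) auto
  also have "\<dots> = E * (y / z)" using \<open>0 < x\<close> by simp
  also have "\<dots> \<le> E" using \<open>0 \<le> E\<close> assms by (intro mult_left_le) (auto simp: divide_le_eq_1)
  finally show ?thesis .
qed

lemma two_block_gap_ge: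
  fixes SA SB SX a b c E F n1 n2 :: real
  assumes n1: "0 < n1" and n2: "0 < n2"
    and A: "\<bar>SA - n1\<^sup>2 * a\<bar> \<le> n1 * E"
    and B: "\<bar>SB - n2\<^sup>2 * c\<bar> \<le> n2 * E"
    and X: "\<bar>SX - n1 * n2 * b\<bar> \<le> F"
  shows "SA / n1 + SB / n2 - (SA + 2 * SX + SB) / (n1 + n2)
    \<ge> n1 * n2 / (n1 + n2) * (a - 2 * b + c) - (2 * E + 2 * F / (n1 + n2))"
proof -
  define n where "n = n1 + n2"
  have "n > 0" using n1 n2 by (simp add: n_def)
  define rA where "rA = (SA - n1\<^sup>2 * a) * (n2 / (n1 * n))"
  define rB where "rB = (SB - n2\<^sup>2 * c) * (n1 / (n2 * n))"
  define rX where "rX = 2 * (SX - n1 * n2 * b) / n"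
  have "SA / n1 + SB / n2 - (SA + 2 * SX + SB) / n = n1 * n2 / n * (a - 2 * b + c) + rA + rB - rX"
    unfolding rA_def rB_def rX_def using n1 n2 \<open>n > 0\<close>
    by (simp add: field_simps power2_eq_square) (simp add: n_def algebra_simps)
  moreover have "\<bar>rA\<bar> \<le> E"
    unfolding rA_def using A n1 n2 by (intro abs_mult_ratio_le) (auto simp: n_def)
  moreover have "\<bar>rB\<bar> \<le> E"
    unfolding rB_def using B n1 n2 by (intro abs_mult_ratio_le) (auto simp: n_def)
  moreover have "rX \<le> 2 * F / n"
    unfolding rX_def using X \<open>n > 0\<close> by (intro divide_right_mono) auto
  ultimately show ?thesis unfolding n_def[symmetric] by linarith
qed

lemma gap_ge_at_min_spacing:
  fixes D n1 n2 l \<Delta> \<Delta>' E X :: real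
  assumes gap: "n1 * n2 / (n1 + n2) * \<Delta> - (E + X / (n1 + n2)) \<le> D"
    and "0 \<le> \<Delta>'" "\<Delta>' \<le> \<Delta>" "0 \<le> X" "0 < l" "l / 2 \<le> n1" "l / 2 \<le> n2"
  shows "\<Delta>' / 4 * l - (E + X / l) \<le> D"
proof -
  have "0 < n1" "0 < n2" using assms by linarith+
  have "l * (n1 + n2) \<le> 4 * (n1 * n2)"
  proof -
    have "0 \<le> n1 * (2 * n2 - l)" "0 \<le> n2 * (2 * n1 - l)"
      using assms \<open>0 < n1\<close> \<open>0 < n2\<close> by simp_all
    then show ?thesis by (simp add: algebra_simps)
  qed
  then have "l / 4 \<le> n1 * n2 / (n1 + n2)"
    using \<open>0 < n1\<close> \<open>0 < n2\<close> by (simp add: field_simps)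
  then have "l / 4 * \<Delta>' \<le> n1 * n2 / (n1 + n2) * \<Delta>'"
    using assms by (intro mult_right_mono) auto
  also have "\<dots> \<le> n1 * n2 / (n1 + n2) * \<Delta>"
    using assms \<open>0 < n1\<close> \<open>0 < n2\<close> by (intro mult_left_mono) auto
  finally have "\<Delta>' / 4 * l \<le> n1 * n2 / (n1 + n2) * \<Delta>" by (simp add: ac_simps)
  moreover have "X / (n1 + n2) \<le> X / l"
    using assms by (intro divide_left_mono) auto
  ultimately show ?thesis using gap by linarith
qed

definition gram_cost :: "(nat \<Rightarrow> nat \<Rightarrow> real) \<Rightarrow> nat \<Rightarrow> nat \<Rightarrow> real" where
  "gram_cost g s e = (\<Sum>t=s..e. g t t) - (1 / real (e - s + 1)) * (\<Sum>i=s..e. \<Sum>j=s..e. g i j)"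

lemma gram_cost_split_diff:
  assumes "s \<le> t" "t < e"
  shows "gram_cost g s e - gram_cost g s t - gram_cost g (t+1) e
    = (\<Sum>i=s..t. \<Sum>j=s..t. g i j) / real (t - s + 1) + (\<Sum>i=t+1..e. \<Sum>j=t+1..e. g i j) / real (e - t)
      - ((\<Sum>i=s..t. \<Sum>j=s..t. g i j) + (\<Sum>i=s..t. \<Sum>j=t+1..e. g i j)
         + (\<Sum>i=t+1..e. \<Sum>j=s..t. g i j) + (\<Sum>i=t+1..e. \<Sum>j=t+1..e. g i j)) / real (e - s + 1)"
proof -
  have split: "(\<Sum>i=s..e. h i) = (\<Sum>i=s..t. h i) + (\<Sum>i=t+1..e. h i)" for h :: "nat \<Rightarrow> real"
    using sum.ub_add_nat[of s t h "e - t"] assms by simp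
  have "e - (t + 1) + 1 = e - t" using assms by simp
  then show ?thesis unfolding gram_cost_def split sum.distrib by simp
qed

lemma (in prob_space) integral_le_const_nonneg:
  fixes f :: "'a \<Rightarrow> real"
  assumes "\<And>x. 0 \<le> f x" "\<And>x. f x \<le> B"
  shows "integral\<^sup>L M f \<le> B"
proof (cases "integrable M f")
  case True
  then show ?thesis using assms by (intro integral_le_const) auto
next
  case False
  then show ?thesis using order_trans[OF assms] by (simp add: not_integrable_integral_eq)
qed

definition kernel_mean_inner :: "('x \<Rightarrow> 'x \<Rightarrow> real) \<Rightarrow> 'x measure \<Rightarrow> 'x measure \<Rightarrow> real" where
  "kernel_mean_inner k P Q = (\<integral>x. (\<integral>y. k x y \<partial>Q) \<partial>P)"

lemma mmd_sq_eq_kernel_mean_inner: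
  "mmd_sq k P Q = kernel_mean_inner k P P - 2 * kernel_mean_inner k P Q + kernel_mean_inner k Q Q"
  by (simp add: mmd_sq_def kernel_mean_inner_def)

lemma kernel_mean_inner_bounds:
  assumes "prob_space P" "prob_space Q" "\<And>x y. 0 \<le> k x y" "\<And>x y. k x y \<le> B"
  shows "0 \<le> kernel_mean_inner k P Q" "kernel_mean_inner k P Q \<le> B"
proof -
  have "0 \<le> (\<integral>y. k x y \<partial>Q)" "(\<integral>y. k x y \<partial>Q) \<le> B" for x
    using assms prob_space.integral_le_const_nonneg[of Q] by auto
  then show "0 \<le> kernel_mean_inner k P Q" "kernel_mean_inner k P Q \<le> B"
    unfolding kernel_mean_inner_def using assms prob_space.integral_le_const_nonneg[of P] by auto
qed

locale m_dependent_kernel_process = prob_space M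
  for M :: "'w measure" +
  fixes Y :: "nat \<Rightarrow> 'w \<Rightarrow> 'x::topological_space" and T m :: nat
    and k :: "'x \<Rightarrow> 'x \<Rightarrow> real" and B :: real
  assumes Y_meas: "\<And>t. t \<in> {1..T} \<Longrightarrow> Y t \<in> borel_measurable M"
    and m_dep: "m_dependent M Y T m"
    and k_meas: "(\<lambda>(x, y). k x y) \<in> borel_measurable (borel \<Otimes>\<^sub>M borel)"
    and k_nonneg: "\<And>x y. 0 \<le> k x y" and k_le: "\<And>x y. k x y \<le> B"
    and k_sym: "\<And>x y. k x y = k y x"
begin

definition gram :: "nat \<Rightarrow> nat \<Rightarrow> real" where
  "gram i j = (\<integral>\<omega>. k (Y i \<omega>) (Y j \<omega>) \<partial>M)"

lemma gram_sym: "gram i j = gram j i"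
  by (simp add: gram_def k_sym)

lemma gram_bounds: "0 \<le> gram i j" "gram i j \<le> B"
  unfolding gram_def using k_nonneg k_le by (auto intro: integral_le_const_nonneg)

lemma B_nonneg: "0 \<le> B"
  using order_trans[OF k_nonneg k_le] .

lemma prob_space_distr_Y: "t \<in> {1..T} \<Longrightarrow> prob_space (distr M borel (Y t))"
  by (intro prob_space_distr Y_meas)

lemma integrable_k_Y:
  assumes "i \<in> {1..T}" "j \<in> {1..T}"
  shows "integrable M (\<lambda>\<omega>. k (Y i \<omega>) (Y j \<omega>))"
proof (rule integrable_const_bound[where B = B])
  have "(\<lambda>\<omega>. (Y i \<omega>, Y j \<omega>)) \<in> M \<rightarrow>\<^sub>M borel \<Otimes>\<^sub>M borel"
    using Y_meas assms by (auto intro!: measurable_Pair)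
  from measurable_compose[OF this k_meas]
  show "(\<lambda>\<omega>. k (Y i \<omega>) (Y j \<omega>)) \<in> borel_measurable M" by simp
qed (use k_nonneg k_le in auto)

lemma Cexp_eq_gram_cost:
  assumes "1 \<le> s" "e \<le> T"
  shows "Cexp M k Y s e = gram_cost gram s e"
proof -
  have int: "integrable M (\<lambda>\<omega>. k (Y i \<omega>) (Y j \<omega>))" if "i \<in> {s..e}" "j \<in> {s..e}" for i j
    using that assms by (intro integrable_k_Y) auto
  have "Cexp M k Y s e = (\<integral>\<omega>. (\<Sum>t=s..e. k (Y t \<omega>) (Y t \<omega>)) \<partial>M)
      - (1 / real (e - s + 1)) * (\<integral>\<omega>. (\<Sum>i=s..e. \<Sum>j=s..e. k (Y i \<omega>) (Y j \<omega>)) \<partial>M)"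
    unfolding Cexp_def Chat_def using int
    by (subst Bochner_Integration.integral_diff) (auto intro!: Bochner_Integration.integrable_sum)
  also have "(\<integral>\<omega>. (\<Sum>i=s..e. \<Sum>j=s..e. k (Y i \<omega>) (Y j \<omega>)) \<partial>M) = (\<Sum>i=s..e. \<Sum>j=s..e. gram i j)"
    unfolding gram_def using int
    by (subst Bochner_Integration.integral_sum)
      (auto intro!: Bochner_Integration.integrable_sum sum.cong Bochner_Integration.integral_sum)
  also have "(\<integral>\<omega>. (\<Sum>t=s..e. k (Y t \<omega>) (Y t \<omega>)) \<partial>M) = (\<Sum>t=s..e. gram t t)"
    unfolding gram_def using int by (simp add: Bochner_Integration.integral_sum)
  finally show ?thesis unfolding gram_cost_def .
qed

lemma indep_var_Y_far:
  assumes "1 \<le> i" "i + m < j" "j \<le> T"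
  shows "indep_var borel (Y i) borel (Y j)"
proof -
  have "indep_var (PiM {1..i} (\<lambda>_. borel)) (\<lambda>\<omega>. restrict (\<lambda>l. Y l \<omega>) {1..i})
      (PiM {i+m+1..T} (\<lambda>_. borel)) (\<lambda>\<omega>. restrict (\<lambda>l. Y l \<omega>) {i+m+1..T})"
    using m_dep unfolding m_dependent_def by blast
  then have "indep_var borel ((\<lambda>f. f i) \<circ> (\<lambda>\<omega>. restrict (\<lambda>l. Y l \<omega>) {1..i}))
      borel ((\<lambda>f. f j) \<circ> (\<lambda>\<omega>. restrict (\<lambda>l. Y l \<omega>) {i+m+1..T}))"
    by (rule indep_var_compose) (use assms in auto)
  moreover have "(\<lambda>f. f i) \<circ> (\<lambda>\<omega>. restrict (\<lambda>l. Y l \<omega>) {1..i}) = Y i"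
    "(\<lambda>f. f j) \<circ> (\<lambda>\<omega>. restrict (\<lambda>l. Y l \<omega>) {i+m+1..T}) = Y j"
    using assms by (auto simp: fun_eq_iff)
  ultimately show ?thesis by simp
qed

lemma gram_eq_kernel_mean_inner_far:
  assumes "1 \<le> i" "i + m < j" "j \<le> T"
  shows "gram i j = kernel_mean_inner k (distr M borel (Y i)) (distr M borel (Y j))"
proof -
  let ?Pi = "distr M borel (Y i)" and ?Pj = "distr M borel (Y j)"
  have Yi: "Y i \<in> borel_measurable M" and Yj: "Y j \<in> borel_measurable M"
    using assms by (auto intro: Y_meas)
  interpret Pi: prob_space ?Pi by (rule prob_space_distr[OF Yi])
  interpret Pj: prob_space ?Pj by (rule prob_space_distr[OF Yj])
  interpret PP: pair_prob_space ?Pi ?Pj ..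
  have joint: "?Pi \<Otimes>\<^sub>M ?Pj = distr M (borel \<Otimes>\<^sub>M borel) (\<lambda>\<omega>. (Y i \<omega>, Y j \<omega>))"
    using indep_var_Y_far[OF assms] indep_var_distribution_eq by blast
  have "integrable (?Pi \<Otimes>\<^sub>M ?Pj) (\<lambda>(x, y). k x y)"
    using k_meas k_nonneg k_le
    by (intro PP.integrable_const_bound[where B = B]) (auto cong: measurable_cong_sets)
  then have "(\<integral>z. (\<lambda>(x, y). k x y) z \<partial>(?Pi \<Otimes>\<^sub>M ?Pj)) = kernel_mean_inner k ?Pi ?Pj"
    unfolding kernel_mean_inner_def by (simp add: PP.integral_fst)
  moreover have "gram i j = (\<integral>z. (\<lambda>(x, y). k x y) z \<partial>distr M (borel \<Otimes>\<^sub>M borel) (\<lambda>\<omega>. (Y i \<omega>, Y j \<omega>)))"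
    unfolding gram_def using k_meas Yi Yj by (subst integral_distr) auto
  ultimately show ?thesis by (simp add: joint)
qed

lemma gram_diag_block_deviation:
  assumes "1 \<le> u" "u \<le> v" "v \<le> T"
    and Q: "\<And>i. i \<in> {u..v} \<Longrightarrow> distr M borel (Y i) = Q"
  shows "\<bar>(\<Sum>i=u..v. \<Sum>j=u..v. gram i j) - (real (v - u + 1))\<^sup>2 * kernel_mean_inner k Q Q\<bar>
    \<le> real (v - u + 1) * ((2 * real m + 1) * B)"
proof -
  let ?a = "kernel_mean_inner k Q Q"
  have "prob_space Q" using Q[of u] prob_space_distr_Y[of u] assms by auto
  then have a: "0 \<le> ?a" "?a \<le> B" using kernel_mean_inner_bounds k_nonneg k_le by blast+
  have far: "gram i j = ?a" if "i \<in> {u..v}" "j \<in> {u..v}" "i + m < j" for i j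
    using gram_eq_kernel_mean_inner_far[of i j] Q that assms by auto
  have "\<bar>\<Sum>i=u..v. \<Sum>j=u..v. gram i j - ?a\<bar> \<le> real (card {u..v}) * ((2 * real m + 1) * B)"
  proof (rule sum_sum_banded_abs_le)
    show "\<bar>gram i j - ?a\<bar> \<le> B" for i j using gram_bounds[of i j] a by linarith
    show "gram i j - ?a = 0" if "i \<in> {u..v}" "j \<in> {u..v}" "i + m < j \<or> j + m < i" for i j
      using that far far[of j i] gram_sym[of i j] by auto
  qed (simp_all add: B_nonneg)
  then show ?thesis using assms by (simp add: sum_subtractf power2_eq_square Suc_diff_le)
qed

lemma gram_cross_block_deviation:
  assumes "1 \<le> s" "s \<le> t" "t < e" "e \<le> T"
    and Q: "\<And>i. i \<in> {s..t} \<Longrightarrow> distr M borel (Y i) = Q"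
    and R: "\<And>i. i \<in> {t+1..e} \<Longrightarrow> distr M borel (Y i) = R"
  shows "\<bar>(\<Sum>i=s..t. \<Sum>j=t+1..e. gram i j) - real (t - s + 1) * real (e - t) * kernel_mean_inner k Q R\<bar>
    \<le> real m * (real m * B)"
proof -
  let ?b = "kernel_mean_inner k Q R"
  have "prob_space Q" using Q[of s] prob_space_distr_Y[of s] assms by auto
  moreover have "prob_space R" using R[of e] prob_space_distr_Y[of e] assms by auto
  ultimately have b: "0 \<le> ?b" "?b \<le> B" using kernel_mean_inner_bounds k_nonneg k_le by blast+
  have "\<bar>\<Sum>i=s..t. \<Sum>j=t+1..e. gram i j - ?b\<bar> \<le> real m * (real m * B)"
  proof (rule sum_sum_corner_abs_le)
    show "\<bar>gram i j - ?b\<bar> \<le> B" for i j using gram_bounds[of i j] b by linarith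
    show "gram i j - ?b = 0" if "i \<in> {s..t}" "j \<in> {t+1..e}" "i + m < j" for i j
      using gram_eq_kernel_mean_inner_far[of i j] Q R that assms by auto
  qed (rule B_nonneg)
  moreover have "card {s..t} = t - s + 1" "card {t+1..e} = e - t" using assms by auto
  ultimately show ?thesis by (simp add: sum_subtractf mult.assoc)
qed

lemma Cexp_gap_ge:
  assumes "1 \<le> s" "s \<le> t" "t < e" "e \<le> T"
    and Q: "\<And>i. i \<in> {s..t} \<Longrightarrow> distr M borel (Y i) = Q"
    and R: "\<And>i. i \<in> {t+1..e} \<Longrightarrow> distr M borel (Y i) = R"
  shows "Cexp M k Y s e - Cexp M k Y s t - Cexp M k Y (t + 1) e
    \<ge> real (t - s + 1) * real (e - t) / (real (t - s + 1) + real (e - t)) * mmd_sq k Q R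
      - ((4 * real m + 2) * B + 2 * real m ^ 2 * B / (real (t - s + 1) + real (e - t)))"
proof -
  let ?n1 = "real (t - s + 1)" and ?n2 = "real (e - t)"
  let ?SX = "\<Sum>i=s..t. \<Sum>j=t+1..e. gram i j"
  have "(\<Sum>i=t+1..e. \<Sum>j=s..t. gram i j) = ?SX"
    by (subst sum.swap) (simp add: gram_sym)
  moreover have "real (e - s + 1) = ?n1 + ?n2" using assms by simp
  ultimately have "Cexp M k Y s e - Cexp M k Y s t - Cexp M k Y (t + 1) e
      = (\<Sum>i=s..t. \<Sum>j=s..t. gram i j) / ?n1 + (\<Sum>i=t+1..e. \<Sum>j=t+1..e. gram i j) / ?n2
        - ((\<Sum>i=s..t. \<Sum>j=s..t. gram i j) + 2 * ?SX + (\<Sum>i=t+1..e. \<Sum>j=t+1..e. gram i j)) / (?n1 + ?n2)"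
    using assms Cexp_eq_gram_cost gram_cost_split_diff[of s t e gram] by simp
  also have "\<dots> \<ge> ?n1 * ?n2 / (?n1 + ?n2) * (kernel_mean_inner k Q Q - 2 * kernel_mean_inner k Q R + kernel_mean_inner k R R)
      - (2 * ((2 * real m + 1) * B) + 2 * (real m * (real m * B)) / (?n1 + ?n2))"
  proof (rule two_block_gap_ge)
    show "\<bar>(\<Sum>i=s..t. \<Sum>j=s..t. gram i j) - ?n1\<^sup>2 * kernel_mean_inner k Q Q\<bar> \<le> ?n1 * ((2 * real m + 1) * B)"
      using assms by (intro gram_diag_block_deviation) auto
    show "\<bar>(\<Sum>i=t+1..e. \<Sum>j=t+1..e. gram i j) - ?n2\<^sup>2 * kernel_mean_inner k R R\<bar> \<le> ?n2 * ((2 * real m + 1) * B)"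
      using assms gram_diag_block_deviation[of "t+1" e R] by simp
    show "\<bar>?SX - ?n1 * ?n2 * kernel_mean_inner k Q R\<bar> \<le> real m * (real m * B)"
      using assms by (intro gram_cross_block_deviation) auto
  qed (use assms in auto)
  finally show ?thesis by (simp add: mmd_sq_eq_kernel_mean_inner power2_eq_square algebra_simps)
qed

end

lemma single_change_point_neighbours:
  fixes \<tau> :: "nat \<Rightarrow> nat"
  assumes "\<tau> 0 = 0" "\<tau> (K + 1) = T" "\<And>j. j \<le> K \<Longrightarrow> \<tau> j < \<tau> (j + 1)"
    and "kk \<in> {1..K}" "1 \<le> s" "e \<le> T" "s \<le> \<tau> kk" "\<tau> kk < e"
    and only_one: "\<And>j. j \<in> {1..K} \<Longrightarrow> j \<noteq> kk \<Longrightarrow> \<not> (s \<le> \<tau> j \<and> \<tau> j < e)"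
  shows "\<tau> (kk - 1) < s" "e \<le> \<tau> (kk + 1)"
proof -
  show "\<tau> (kk - 1) < s"
  proof (cases "kk = 1")
    case False
    have "kk - 1 \<le> K" "kk - 1 + 1 = kk" using assms(4) by auto
    then have "\<tau> (kk - 1) < \<tau> kk" using assms(3)[of "kk - 1"] by metis
    then show ?thesis using only_one[of "kk - 1"] False assms(4,8) by fastforce
  qed (use assms in simp)
  show "e \<le> \<tau> (kk + 1)"
  proof (cases "kk = K")
    case False
    then have "\<tau> kk < \<tau> (kk + 1)" using assms(3)[of kk] assms(4) by simp
    then show ?thesis using only_one[of "kk + 1"] False assms(4,7) by fastforce
  qed (use assms in simp)
qed

lemma min_spacing_pos:
  fixes \<tau> :: "nat \<Rightarrow> nat"
  assumes "\<And>j. j \<le> K \<Longrightarrow> \<tau> j < \<tau> (j + 1)"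
  shows "0 < Min ((\<lambda>j. \<tau> j - \<tau> (j - 1)) ` {1..K+1})"
proof -
  have "\<tau> (j - 1) < \<tau> j" if "j \<in> {1..K+1}" for j
  proof -
    have "j - 1 \<le> K" "j - 1 + 1 = j" using that by auto
    then show ?thesis using assms[of "j - 1"] by metis
  qed
  then show ?thesis by (subst Min_gr_iff) auto
qed

theorem mainTheorem6:
  fixes M :: "'w measure"
    and Y :: "nat \<Rightarrow> 'w \<Rightarrow> real ^ 'd"
    and kern :: "real ^ 'd \<Rightarrow> real ^ 'd \<Rightarrow> real"
    and \<tau> :: "nat \<Rightarrow> nat"
    and P :: "nat \<Rightarrow> (real ^ 'd) measure"
    and T K m kk s e :: nat
    and Mb :: real
  assumes prob: "prob_space M"
    and Y_meas: "\<And>t. t \<in> {1..T} \<Longrightarrow> Y t \<in> borel_measurable M"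
    and tau0: "\<tau> 0 = 0"
    and tauT: "\<tau> (K + 1) = T"
    and tau_mono: "\<And>j. j \<le> K \<Longrightarrow> \<tau> j < \<tau> (j + 1)"
    \<comment> \<open>(A1)\<close>
    and mdep: "m_dependent M Y T m"
    and stat: "\<And>j. j \<in> {1..K+1} \<Longrightarrow> strictly_stationary_on M Y {\<tau> (j - 1) + 1 .. \<tau> j}"
    and marg: "\<And>j t. j \<in> {1..K+1} \<Longrightarrow> t \<in> {\<tau> (j - 1) + 1 .. \<tau> j} \<Longrightarrow>
                 distr M borel (Y t) = P j"
    \<comment> \<open>(A2)\<close>
    and kern_meas: "(\<lambda>(x, y). kern x y) \<in> borel_measurable (borel \<Otimes>\<^sub>M borel)"
    and kern_pd: "pos_def_kernel kern"
    and kern_char: "characteristic_kernel kern"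
    and kern_bdd: "\<And>x y. 0 \<le> kern x y \<and> kern x y \<le> Mb"
    \<comment> \<open>(A3)\<close>
    and Delta_pos: "\<And>j. j \<in> {1..K} \<Longrightarrow> mmd_sq kern (P j) (P (j + 1)) > 0"
    \<comment> \<open>the interval [s,e] contains exactly the change point \<tau>_kk\<close>
    and kk: "kk \<in> {1..K}"
    and se: "1 \<le> s" "e \<le> T"
    and s_tau: "s \<le> \<tau> kk" "\<tau> kk < e"
    and only_one: "\<And>j. j \<in> {1..K} \<Longrightarrow> j \<noteq> kk \<Longrightarrow> \<not> (s \<le> \<tau> j \<and> \<tau> j < e)"
  shows "let n1 = real (\<tau> kk - s + 1); n2 = real (e - \<tau> kk); n = n1 + n2;
             \<rho> = n1 * n2 / n;
             \<Delta>k = mmd_sq kern (P kk) (P (kk + 1));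
             \<Delta>star = Min ((\<lambda>j. mmd_sq kern (P j) (P (j + 1))) ` {1..K});
             lT = real (Min ((\<lambda>j. \<tau> j - \<tau> (j - 1)) ` {1..K+1}));
             D = Cexp M kern Y s e - Cexp M kern Y s (\<tau> kk) - Cexp M kern Y (\<tau> kk + 1) e
         in D \<ge> \<rho> * \<Delta>k - ((4 * real m + 2) * Mb + (2 * real m ^ 2 + 2 * real m) * Mb / n)
            \<and> (n1 \<ge> lT / 2 \<and> n2 \<ge> lT / 2 \<longrightarrow>
                D \<ge> \<Delta>star / 4 * lT - ((4 * real m + 2) * Mb + (2 * real m ^ 2 + 2 * real m) * Mb / lT))"
proof -
  interpret m_dependent_kernel_process M Y T m kern Mb
    using prob Y_meas mdep kern_meas kern_bdd kern_pd
    by (simp add: m_dependent_kernel_process_def m_dependent_kernel_process_axioms_def pos_def_kernel_def)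
  have regimes: "\<tau> (kk - 1) < s" "e \<le> \<tau> (kk + 1)"
    using single_change_point_neighbours[OF tau0 tauT tau_mono kk se s_tau only_one] by auto
  define n1 where "n1 = real (\<tau> kk - s + 1)"
  define n2 where "n2 = real (e - \<tau> kk)"
  define D where "D = Cexp M kern Y s e - Cexp M kern Y s (\<tau> kk) - Cexp M kern Y (\<tau> kk + 1) e"
  define \<Delta> where "\<Delta> = mmd_sq kern (P kk) (P (kk + 1))"
  define \<Delta>' where "\<Delta>' = Min ((\<lambda>j. mmd_sq kern (P j) (P (j + 1))) ` {1..K})"
  define l where "l = real (Min ((\<lambda>j. \<tau> j - \<tau> (j - 1)) ` {1..K+1}))"
  define X where "X = (2 * real m ^ 2 + 2 * real m) * Mb"
  have "D \<ge> n1 * n2 / (n1 + n2) * \<Delta> - ((4 * real m + 2) * Mb + 2 * real m ^ 2 * Mb / (n1 + n2))"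
    unfolding D_def n1_def n2_def \<Delta>_def using kk se s_tau regimes
    by (intro Cexp_gap_ge) (auto intro!: marg)
  moreover have "2 * real m ^ 2 * Mb / (n1 + n2) \<le> X / (n1 + n2)"
    unfolding X_def n1_def n2_def using B_nonneg by (intro divide_right_mono mult_right_mono) auto
  ultimately have first_bound: "D \<ge> n1 * n2 / (n1 + n2) * \<Delta> - ((4 * real m + 2) * Mb + X / (n1 + n2))"
    by linarith
  have "\<Delta>' \<le> \<Delta>"
    unfolding \<Delta>'_def \<Delta>_def using kk by (intro Min_le) auto
  moreover have "0 \<le> \<Delta>'"
    unfolding \<Delta>'_def using kk Delta_pos by (subst Min_ge_iff) (auto intro: less_imp_le)
  moreover have "0 \<le> X" unfolding X_def using B_nonneg by simp
  moreover have "0 < l" unfolding l_def using min_spacing_pos[where K = K and \<tau> = \<tau>] tau_mono by simp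
  ultimately have second_bound: "l / 2 \<le> n1 \<and> l / 2 \<le> n2 \<longrightarrow> D \<ge> \<Delta>' / 4 * l - ((4 * real m + 2) * Mb + X / l)"
    using first_bound gap_ge_at_min_spacing by blast
  show ?thesis
    unfolding Let_def n1_def[symmetric] n2_def[symmetric] D_def[symmetric] \<Delta>_def[symmetric]
      \<Delta>'_def[symmetric] l_def[symmetric] X_def[symmetric]
    using first_bound second_bound by blast
qed

end
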